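(* Let $\mu,\lambda\in A_2$ and let $\varphi\in L^1(\mathbb{T})$ be such that its Poisson extension to $\mathbb{D}$ is analytic or anti-analytic. Let $dv_1(z)=|\nabla\varphi(z)|^2\log\frac{1}{|z|}\,dA(z)$ and $dv_2(z)=|\nabla\varphi(z)|^2(1-|z|^2)\,dA(z)$. Then $dv_1$ is $\lambda$-$\mu$ Carleson if and only if $dv_2$ is $\lambda$-$\mu$ Carleson.
   Context: $\mathbb{T}$ is the unit circle, $\mathbb{D}$ the unit disc, $dm$ normalized arc length measure, $dA$ normalized area measure on $\mathbb{D}$. A weight $w\ge0$ is in $A_2$ if $\sup_{I}\big(\frac{1}{|I|}\int_I w\,dm\big)\big(\frac{1}{|I|}\int_I w^{-1}dm\big)<\infty$ over subarcs $I\subset\mathbb{T}$. $P_z(\zeta)=\frac{1-|z|^2}{|1-\bar z\zeta|^2}$ is the Poisson kernel and $u(z)=\int_{\mathbb{T}}uP_z\,dm$ the Poisson extension of an integrable $u$ on $\mathbb{T}$; $\varphi(z)$ denotes the Poisson extension of $\varphi$. A nonnegative measure $\tau$ on $\mathbb{D}$ is called $\lambda$-$\mu$ Carleson if $\sup_{z\in\mathbb{D}}\frac{1}{\mu(z)}\int_{\mathbb{D}}P_z(\zeta)\lambda(\zeta)\,d\tau(\zeta)<\infty$ (equivalently, $\int_{\mathbb{D}}|f|^2\lambda\,d\tau\le B\int_{\mathbb{T}}|f|^2\mu\,dm$ for all $f\in L^2(\mathbb{T},\mu\,dm)$, with $f,\lambda,\mu$ Poisson-extended to $\mathbb{D}$).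 *)

theory Defs
  imports "HOL-Analysis.Analysis"
begin

text \<open>Functions on the unit circle T are functions on complex numbers, evaluated at cis t,
  t in [0, 2 pi]. Normalized arc length measure dm = dt / (2 pi).\<close>

definition poisson_kernel :: "complex \<Rightarrow> complex \<Rightarrow> real" where
  "poisson_kernel z \<zeta> = (1 - (cmod z)\<^sup>2) / (cmod (1 - cnj z * \<zeta>))\<^sup>2"

definition poisson_ext :: "(complex \<Rightarrow> 'a::{banach, second_countable_topology}) \<Rightarrow> complex \<Rightarrow> 'a" where
  "poisson_ext u z = (1 / (2 * pi)) *\<^sub>R
     (LINT t:{0..2*pi}|lborel. poisson_kernel z (cis t) *\<^sub>R u (cis t))"

definition L1_circle :: "(complex \<Rightarrow> 'a::{banach, second_countable_topology}) \<Rightarrow> bool" where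
  "L1_circle u \<longleftrightarrow> set_integrable lborel {0..2*pi} (\<lambda>t. u (cis t))"

text \<open>Average of a nonnegative function over the subarc {cis t | a <= t <= b}
  (the normalizations of dm and |I| cancel).\<close>
definition arc_avg :: "(complex \<Rightarrow> ennreal) \<Rightarrow> real \<Rightarrow> real \<Rightarrow> ennreal" where
  "arc_avg w a b = (\<integral>\<^sup>+ t\<in>{a..b}. w (cis t) \<partial>lborel) / ennreal (b - a)"

definition A2_weight :: "(complex \<Rightarrow> real) \<Rightarrow> bool" where
  "A2_weight w \<longleftrightarrow>
     (\<lambda>t. w (cis t)) \<in> borel_measurable lborel \<and>
     (\<forall>t. w (cis t) \<ge> 0) \<and>
     (\<exists>C::real. \<forall>a b. a < b \<and> b - a \<le> 2 * pi \<longrightarrow>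
        arc_avg (\<lambda>\<zeta>. ennreal (w \<zeta>)) a b * arc_avg (\<lambda>\<zeta>. inverse (ennreal (w \<zeta>))) a b
          \<le> ennreal C)"

definition area_disc :: "complex measure" where
  "area_disc = density lborel (\<lambda>z. indicator (ball 0 1) z / ennreal pi)"

definition carleson :: "(complex \<Rightarrow> real) \<Rightarrow> (complex \<Rightarrow> real) \<Rightarrow> complex measure \<Rightarrow> bool" where
  "carleson lam mu \<tau> \<longleftrightarrow>
     (\<exists>C::real. \<forall>z\<in>ball 0 1.
        (\<integral>\<^sup>+ \<zeta>\<in>ball 0 1. ennreal (poisson_kernel z \<zeta> * poisson_ext lam \<zeta>) \<partial>\<tau>)
          \<le> ennreal (C * poisson_ext mu z))"

definition grad_sq :: "(complex \<Rightarrow> complex) \<Rightarrow> complex \<Rightarrow> real" where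
  "grad_sq F z =
     (cmod (vector_derivative (\<lambda>s::real. F (z + of_real s)) (at 0)))\<^sup>2 +
     (cmod (vector_derivative (\<lambda>s::real. F (z + \<i> * of_real s)) (at 0)))\<^sup>2"

end

theory Submission
  imports Defs "HOL-Complex_Analysis.Complex_Analysis"
begin

text \<open>
  On the disc 1 - r^2 \<le> 2 log (1/r), so v2 \<le> 2 v1 and every \<lambda>-\<mu> Carleson bound for v1 is one
  for v2. Conversely log (1/r) \<le> 2 (1 - r^2) for r \<ge> 1/2, so only the part of v1 on the disc
  |\<zeta>| \<le> 1/2 needs control. There |\<nabla>\<phi>|^2 is bounded (it is 2 |H'|^2 for the holomorphic H = \<phi>
  or H = conj \<phi>), log (1/|\<zeta>|) dA has finite mass, \<lambda>(\<zeta>) \<le> 3 \<lambda>(0) by Harnack's inequality, and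
  P_z(\<zeta>) \<le> 8 (1 - |z|) \<le> 16 \<mu>(z) / \<mu>(0), again by Harnack. This needs \<mu>(0) > 0; if \<mu>(0) = 0,
  testing either Carleson condition at z = 0 shows that it holds iff |\<nabla>\<phi>|^2 \<lambda> vanishes a.e.
\<close>

lemma borel_measurable_cnj [measurable]:
  "f \<in> borel_measurable M \<Longrightarrow> (\<lambda>x. cnj (f x)) \<in> borel_measurable M"
  by (rule borel_measurable_continuous_on[of cnj]) (auto intro!: continuous_intros)

lemma borel_measurable_cis [measurable]:
  "f \<in> borel_measurable M \<Longrightarrow> (\<lambda>x. cis (f x)) \<in> borel_measurable M"
  by (rule borel_measurable_continuous_on[of cis]) (auto intro!: continuous_intros)

lemma borel_measurable_poisson_kernel [measurable]:
  "(\<lambda>\<zeta>. poisson_kernel z \<zeta>) \<in> borel_measurable borel"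
  unfolding poisson_kernel_def by measurable

lemma poisson_kernel_0 [simp]: "poisson_kernel 0 \<zeta> = 1"
  by (simp add: poisson_kernel_def)

lemma poisson_kernel_nonneg: "cmod z \<le> 1 \<Longrightarrow> 0 \<le> poisson_kernel z \<zeta>"
  unfolding poisson_kernel_def by (auto simp: power_le_one)

lemma norm_one_minus_cnj_mult_ge: "1 - cmod z * cmod \<zeta> \<le> cmod (1 - cnj z * \<zeta>)"
  using norm_triangle_ineq2[of 1 "cnj z * \<zeta>"] by (simp add: norm_mult)

lemma poisson_kernel_le:
  assumes z: "cmod z < 1" and \<zeta>: "cmod \<zeta> \<le> 1"
  shows "poisson_kernel z \<zeta> \<le> (1 - (cmod z)\<^sup>2) / (1 - cmod z * cmod \<zeta>)\<^sup>2"
proof -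
  have pos: "0 < 1 - cmod z * cmod \<zeta>"
    using z mult_left_le[OF \<zeta> norm_ge_zero[of z]] by linarith
  then have "(1 - cmod z * cmod \<zeta>)\<^sup>2 \<le> (cmod (1 - cnj z * \<zeta>))\<^sup>2"
    by (intro power_mono norm_one_minus_cnj_mult_ge) auto
  then show ?thesis
    unfolding poisson_kernel_def using z pos
    by (intro divide_left_mono) (auto simp: abs_square_le_1 power_le_one intro!: mult_pos_pos)
qed

lemma poisson_kernel_ge:
  assumes z: "cmod z < 1" and \<zeta>: "cmod \<zeta> \<le> 1"
  shows "(1 - (cmod z)\<^sup>2) / (1 + cmod z * cmod \<zeta>)\<^sup>2 \<le> poisson_kernel z \<zeta>"
proof -
  have pos: "0 < cmod (1 - cnj z * \<zeta>)"
    using z mult_left_le[OF \<zeta> norm_ge_zero[of z]] norm_one_minus_cnj_mult_ge[of z \<zeta>] by linarith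
  have "cmod (1 - cnj z * \<zeta>) \<le> 1 + cmod z * cmod \<zeta>"
    using norm_triangle_ineq4[of 1 "cnj z * \<zeta>"] by (simp add: norm_mult)
  then have "(cmod (1 - cnj z * \<zeta>))\<^sup>2 \<le> (1 + cmod z * cmod \<zeta>)\<^sup>2"
    using pos by (intro power_mono) auto
  then show ?thesis
    unfolding poisson_kernel_def using z pos
    by (intro divide_left_mono) (auto simp: abs_square_le_1 power_le_one intro!: mult_pos_pos)
qed

lemma poisson_kernel_cis_ge:
  assumes "cmod z < 1"
  shows "(1 - cmod z) / (1 + cmod z) \<le> poisson_kernel z (cis t)"
proof -
  have "1 - (cmod z)\<^sup>2 = (1 - cmod z) * (1 + cmod z)" "0 < 1 + cmod z"
    by (simp_all add: power2_eq_square algebra_simps add_pos_nonneg)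
  then have "(1 - cmod z) / (1 + cmod z) = (1 - (cmod z)\<^sup>2) / (1 + cmod z * cmod (cis t))\<^sup>2"
    by (simp add: power2_eq_square)
  also have "\<dots> \<le> poisson_kernel z (cis t)"
    using assms by (intro poisson_kernel_ge) auto
  finally show ?thesis .
qed

lemma poisson_kernel_cis_le:
  assumes "cmod z < 1"
  shows "poisson_kernel z (cis t) \<le> (1 + cmod z) / (1 - cmod z)"
proof -
  have "poisson_kernel z (cis t) \<le> (1 - (cmod z)\<^sup>2) / (1 - cmod z * cmod (cis t))\<^sup>2"
    using assms by (intro poisson_kernel_le) auto
  also have "\<dots> = ((1 + cmod z) * (1 - cmod z)) / ((1 - cmod z) * (1 - cmod z))"
    by (simp add: power2_eq_square algebra_simps)
  also have "\<dots> = (1 + cmod z) / (1 - cmod z)"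
    using assms by simp
  finally show ?thesis .
qed

lemma poisson_kernel_le_half_disc:
  assumes z: "cmod z < 1" and \<zeta>: "cmod \<zeta> \<le> 1/2"
  shows "poisson_kernel z \<zeta> \<le> 8 * (1 - cmod z)"
proof -
  have "cmod z * cmod \<zeta> \<le> 1/2"
    using z \<zeta> mult_mono[of "cmod z" 1 "cmod \<zeta>" "1/2"] by simp
  then have "(1/2)\<^sup>2 \<le> (1 - cmod z * cmod \<zeta>)\<^sup>2"
    by (intro power_mono) auto
  then have "(1 - (cmod z)\<^sup>2) / (1 - cmod z * cmod \<zeta>)\<^sup>2 \<le> (1 - (cmod z)\<^sup>2) / (1/2)\<^sup>2"
    using z by (intro divide_left_mono) (auto simp: abs_square_le_1 power_le_one intro!: mult_pos_pos)
  also have "\<dots> = 4 * (1 - cmod z) * (1 + cmod z)"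
    by (simp add: power2_eq_square algebra_simps)
  also have "\<dots> \<le> 4 * (1 - cmod z) * 2"
    using z by (intro mult_left_mono) auto
  finally show ?thesis
    using poisson_kernel_le[of z \<zeta>] z \<zeta> by simp
qed

lemma borel_measurable_poisson_ext:
  fixes w :: "complex \<Rightarrow> real"
  assumes [measurable]: "(\<lambda>t. w (cis t)) \<in> borel_measurable lborel"
  shows "poisson_ext w \<in> borel_measurable borel"
proof -
  have [measurable]: "(\<lambda>(z, t). poisson_kernel z (cis t)) \<in> borel_measurable (borel \<Otimes>\<^sub>M lborel)"
    unfolding poisson_kernel_def by measurable
  show ?thesis
    unfolding poisson_ext_def set_lebesgue_integral_def by measurable
qed

lemma poisson_ext_nonneg:
  fixes w :: "complex \<Rightarrow> real"
  assumes "\<And>t. 0 \<le> w (cis t)" and "cmod z \<le> 1"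
  shows "0 \<le> poisson_ext w z"
  unfolding poisson_ext_def set_lebesgue_integral_def
  using assms poisson_kernel_nonneg by (auto intro!: integral_nonneg simp: indicator_def)

lemma set_integrable_poisson_kernel_iff:
  fixes w :: "complex \<Rightarrow> real"
  assumes [measurable]: "(\<lambda>t. w (cis t)) \<in> borel_measurable lborel" and z: "cmod z < 1"
  shows "set_integrable lborel {0..2*pi} (\<lambda>t. poisson_kernel z (cis t) *\<^sub>R w (cis t))
     \<longleftrightarrow> set_integrable lborel {0..2*pi} (\<lambda>t. w (cis t))"
proof -
  define K where "K = (1 + cmod z) / (1 - cmod z)"
  have P: "1 \<le> K * poisson_kernel z (cis t)" "poisson_kernel z (cis t) \<le> K" for t
  proof -
    have "(1 - cmod z) / (1 + cmod z) \<le> poisson_kernel z (cis t)"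
      using poisson_kernel_cis_ge[OF z] .
    then show "1 \<le> K * poisson_kernel z (cis t)"
      using z unfolding K_def by (simp add: field_simps add_pos_nonneg)
    show "poisson_kernel z (cis t) \<le> K"
      unfolding K_def using poisson_kernel_cis_le[OF z] .
  qed
  have K0: "0 \<le> K"
    using z unfolding K_def by simp
  have P0: "0 \<le> poisson_kernel z (cis t)" for t
    using z poisson_kernel_nonneg by simp
  have bound1: "\<bar>w (cis t)\<bar> \<le> \<bar>K * (poisson_kernel z (cis t) * w (cis t))\<bar>" for t
    using mult_right_mono[OF P(1) abs_ge_zero[of "w (cis t)"]] K0 P0[of t]
    by (simp add: abs_mult mult.assoc)
  have bound2: "\<bar>poisson_kernel z (cis t) * w (cis t)\<bar> \<le> \<bar>K * w (cis t)\<bar>" for t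
    using mult_right_mono[OF P(2) abs_ge_zero[of "w (cis t)"]] K0 P0[of t]
    by (simp add: abs_mult)
  show ?thesis
  proof
    assume "set_integrable lborel {0..2*pi} (\<lambda>t. poisson_kernel z (cis t) *\<^sub>R w (cis t))"
    then have "set_integrable lborel {0..2*pi} (\<lambda>t. K * (poisson_kernel z (cis t) *\<^sub>R w (cis t)))"
      by simp
    then show "set_integrable lborel {0..2*pi} (\<lambda>t. w (cis t))"
      by (rule set_integrable_bound) (auto simp: set_borel_measurable_def bound1)
  next
    assume "set_integrable lborel {0..2*pi} (\<lambda>t. w (cis t))"
    then have "set_integrable lborel {0..2*pi} (\<lambda>t. K * w (cis t))"
      by simp
    then show "set_integrable lborel {0..2*pi} (\<lambda>t. poisson_kernel z (cis t) *\<^sub>R w (cis t))"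
      by (rule set_integrable_bound) (auto simp: set_borel_measurable_def bound2)
  qed
qed

lemma poisson_ext_le_scaled:
  fixes w :: "complex \<Rightarrow> real"
  assumes w [measurable]: "(\<lambda>t. w (cis t)) \<in> borel_measurable lborel"
    and w_nonneg: "\<And>t. 0 \<le> w (cis t)"
    and z1: "cmod z1 < 1" and z2: "cmod z2 < 1" and "0 \<le> a"
    and le: "\<And>t. poisson_kernel z1 (cis t) \<le> a * poisson_kernel z2 (cis t)"
  shows "poisson_ext w z1 \<le> a * poisson_ext w z2"
proof (cases "set_integrable lborel {0..2*pi} (\<lambda>t. w (cis t))")
  case True
  have "(LINT t:{0..2*pi}|lborel. poisson_kernel z1 (cis t) *\<^sub>R w (cis t))
      \<le> (LINT t:{0..2*pi}|lborel. a * (poisson_kernel z2 (cis t) *\<^sub>R w (cis t)))"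
  proof (rule set_integral_mono)
    show "poisson_kernel z1 (cis t) *\<^sub>R w (cis t) \<le> a * (poisson_kernel z2 (cis t) *\<^sub>R w (cis t))" for t
      using mult_right_mono[OF le w_nonneg[of t]] by (simp add: mult.assoc)
  qed (use True set_integrable_poisson_kernel_iff[OF w z1] set_integrable_poisson_kernel_iff[OF w z2] in simp_all)
  then show ?thesis
    unfolding poisson_ext_def set_integral_mult_right by (simp add: field_simps divide_right_mono)
next
  case False
  \<comment> \<open>the Bochner integral of a non-integrable function is 0, hence so is the extension\<close>
  then have "poisson_ext w z1 = 0"
    using set_integrable_poisson_kernel_iff[OF w z1]
    unfolding poisson_ext_def set_lebesgue_integral_def set_integrable_def
    by (simp add: not_integrable_integral_eq)
  then show ?thesis
    using poisson_ext_nonneg[of w z2] w_nonneg z2 \<open>0 \<le> a\<close> by simp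
qed

lemma poisson_ext_harnack:
  fixes w :: "complex \<Rightarrow> real"
  assumes "(\<lambda>t. w (cis t)) \<in> borel_measurable lborel" and "\<And>t. 0 \<le> w (cis t)"
    and z: "cmod z < 1"
  shows "(1 - cmod z) / (1 + cmod z) * poisson_ext w 0 \<le> poisson_ext w z"
    and "poisson_ext w z \<le> (1 + cmod z) / (1 - cmod z) * poisson_ext w 0"
proof -
  have "poisson_ext w 0 \<le> (1 + cmod z) / (1 - cmod z) * poisson_ext w z"
  proof (rule poisson_ext_le_scaled[OF assms(1,2)])
    show "poisson_kernel 0 (cis t) \<le> (1 + cmod z) / (1 - cmod z) * poisson_kernel z (cis t)" for t
      using poisson_kernel_cis_ge[OF z, of t] z by (simp add: field_simps add_pos_nonneg)
  qed (use z in auto)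
  then show "(1 - cmod z) / (1 + cmod z) * poisson_ext w 0 \<le> poisson_ext w z"
    using z by (simp add: field_simps add_pos_nonneg)
  show "poisson_ext w z \<le> (1 + cmod z) / (1 - cmod z) * poisson_ext w 0"
    by (rule poisson_ext_le_scaled[OF assms(1,2) z])
       (use z poisson_kernel_cis_le[OF z] in auto)
qed

lemma has_vector_derivative_along_line:
  assumes "H holomorphic_on S" "open S" "z \<in> S"
  shows "((\<lambda>s::real. H (z + c * of_real s)) has_vector_derivative (c * deriv H z)) (at 0)"
proof -
  have line: "((\<lambda>s::real. z + c * of_real s) has_vector_derivative c) (at 0)"
    by (auto intro!: derivative_eq_intros)
  have "(H has_field_derivative deriv H z) (at ((\<lambda>s::real. z + c * of_real s) 0))"
    using holomorphic_derivI[OF assms] by simp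
  from field_vector_diff_chain_at[OF line this] show ?thesis
    by (simp add: o_def)
qed

lemma grad_sq_holomorphic:
  assumes "H holomorphic_on S" "open S" "z \<in> S"
  shows "grad_sq H z = 2 * (cmod (deriv H z))\<^sup>2"
  using has_vector_derivative_along_line[OF assms, of 1] has_vector_derivative_along_line[OF assms, of \<i>]
  by (simp add: grad_sq_def norm_mult vector_derivative_at)

lemma grad_sq_antiholomorphic:
  assumes "(\<lambda>z. cnj (F z)) holomorphic_on S" "open S" "z \<in> S"
  shows "grad_sq F z = 2 * (cmod (deriv (\<lambda>z. cnj (F z)) z))\<^sup>2"
  using has_vector_derivative_along_line[OF assms, of 1, THEN has_vector_derivative_cnj]
    has_vector_derivative_along_line[OF assms, of \<i>, THEN has_vector_derivative_cnj]
  by (simp add: grad_sq_def norm_mult vector_derivative_at)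

lemma continuous_on_grad_sq:
  assumes "F holomorphic_on S \<or> (\<lambda>z. cnj (F z)) holomorphic_on S" and S: "open S"
  shows "continuous_on S (grad_sq F)"
proof -
  obtain H where H: "H holomorphic_on S"
    and grad: "\<And>z. z \<in> S \<Longrightarrow> grad_sq F z = 2 * (cmod (deriv H z))\<^sup>2"
    using assms(1)
  proof
    assume "F holomorphic_on S"
    with S show ?thesis
      using that grad_sq_holomorphic by blast
  next
    assume "(\<lambda>z. cnj (F z)) holomorphic_on S"
    with S show ?thesis
      using that grad_sq_antiholomorphic by blast
  qed
  have "continuous_on S (\<lambda>z. 2 * (cmod (deriv H z))\<^sup>2)"
    using holomorphic_deriv[OF H S]
    by (intro continuous_intros holomorphic_on_imp_continuous_on)
  then show ?thesis
    using continuous_on_cong[OF refl grad, of S] by simp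
qed

lemma grad_sq_nonneg: "0 \<le> grad_sq F z"
  by (simp add: grad_sq_def)

lemma sets_borel_ball_cball [measurable]:
  "ball (0::complex) r \<in> sets borel" "cball (0::complex) r \<in> sets borel"
  by simp_all

lemma sets_area_disc [simp, measurable_cong]: "sets area_disc = sets borel"
  by (simp add: area_disc_def)

lemma measurable_area_disc_iff: "f \<in> borel_measurable area_disc \<longleftrightarrow> f \<in> borel_measurable borel"
  by (subst measurable_cong_sets[OF sets_area_disc refl]) (rule refl)

lemma borel_measurable_area_disc_density:
  "(\<lambda>z::complex. indicator (ball 0 1) z / ennreal pi) \<in> borel_measurable lborel"
  by (intro borel_measurable_divide_ennreal borel_measurable_indicator) auto

lemma AE_area_disc: "AE z in area_disc. z \<in> ball 0 1 \<and> z \<noteq> 0"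
proof -
  have "AE z in lborel. z \<noteq> (0::complex)"
    by (rule AE_lborel_singleton)
  then show ?thesis
    unfolding area_disc_def
    by (subst AE_density[OF borel_measurable_area_disc_density])
       (auto simp: indicator_def elim!: eventually_mono)
qed

lemma density_area_disc_cong:
  assumes "\<And>z. z \<in> ball 0 1 \<Longrightarrow> f z = g z"
  shows "density area_disc f = density area_disc g"
proof -
  have "(\<integral>\<^sup>+x. f x * indicator A x \<partial>area_disc) = (\<integral>\<^sup>+x. g x * indicator A x \<partial>area_disc)"
    for A
    using AE_area_disc by (intro nn_integral_cong_AE) (auto simp: assms elim!: eventually_mono)
  then show ?thesis
    unfolding density_def by simp
qed

lemma emeasure_area_disc_cball_le: "emeasure area_disc (cball 0 r) \<le> ennreal (r\<^sup>2)"
proof (cases "r \<ge> 0")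
  case True
  have "emeasure area_disc (cball 0 r)
      = (\<integral>\<^sup>+ z. indicator (ball (0::complex) 1) z / ennreal pi * indicator (cball 0 r) z \<partial>lborel)"
    unfolding area_disc_def
    by (subst emeasure_density[OF borel_measurable_area_disc_density]) auto
  also have "\<dots> \<le> (\<integral>\<^sup>+ z. ennreal (1 / pi) * indicator (cball (0::complex) r) z \<partial>lborel)"
    using divide_ennreal[of 1 pi] by (intro nn_integral_mono) (auto simp: indicator_def)
  also have "\<dots> = ennreal (1 / pi) * ennreal (pi * r\<^sup>2)"
    using True unit_ball_vol_2 by (simp add: nn_integral_cmult_indicator emeasure_cball DIM_complex)
  also have "\<dots> = ennreal (r\<^sup>2)"
    by (simp add: ennreal_mult[symmetric])
  finally show ?thesis .
qed simp

lemma ln_inverse_nonneg: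
  assumes "0 \<le> (r::real)" "r \<le> 1"
  shows "0 \<le> ln (1 / r)"
  using assms by (cases "r = 0") simp_all

lemma one_minus_sq_le_two_ln_inverse:
  assumes "0 < (r::real)"
  shows "1 - r\<^sup>2 \<le> 2 * ln (1 / r)"
proof -
  have "ln (r\<^sup>2) \<le> r\<^sup>2 - 1"
    using assms by (intro ln_le_minus_one) simp
  then show ?thesis
    using assms by (simp add: ln_div ln_realpow)
qed

lemma ln_inverse_le_two_one_minus_sq:
  assumes "1/2 \<le> (r::real)" "r \<le> 1"
  shows "ln (1 / r) \<le> 2 * (1 - r\<^sup>2)"
proof -
  have "ln (1 / r) \<le> 1 / r - 1"
    using assms by (intro ln_le_minus_one) simp
  also have "\<dots> = (1 - r) / r"
    using assms by (simp add: field_simps)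
  also have "\<dots> \<le> (1 - r) / (1/2)"
    using assms by (intro divide_left_mono) auto
  also have "\<dots> \<le> 2 * (1 - r\<^sup>2)"
    using assms mult_right_mono[of r 1 r] by (simp add: power2_eq_square)
  finally show ?thesis .
qed

lemma ln_inverse_le_dyadic_sum:
  assumes "\<zeta> \<noteq> 0"
  shows "ennreal (ln (1 / cmod \<zeta>) * indicator (cball 0 (1/2)) \<zeta>)
    \<le> (\<Sum>k. ennreal (ln 2) * indicator (cball 0 ((1/2)^k)) \<zeta>)"
proof (cases "\<zeta> \<in> cball 0 (1/2)")
  case True
  define r where "r = cmod \<zeta>"
  have r: "0 < r" "r \<le> 1/2"
    using True assms by (auto simp: r_def)
  have "1 \<le> log 2 (1 / r)"
    using r by (subst le_log_iff) (auto simp: field_simps)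
  then obtain m :: nat where m: "real m \<le> log 2 (1 / r)" "log 2 (1 / r) < real m + 1"
    by (intro that[of "nat \<lfloor>log 2 (1 / r)\<rfloor>"]) linarith+
  have "2 ^ m \<le> 1 / r"
    using m(1) r by (subst (asm) le_log_iff) (auto simp: powr_realpow)
  have small: "\<zeta> \<in> cball 0 ((1/2)^k)" if "k < Suc m" for k
  proof -
    have "r * 2 ^ k \<le> r * 2 ^ m"
      using that r by (intro mult_left_mono power_increasing) auto
    also have "\<dots> \<le> 1"
      using \<open>2 ^ m \<le> 1 / r\<close> r by (simp add: field_simps)
    finally have "r * 2 ^ k \<le> 1" .
    then have "r \<le> 1 / 2 ^ k"
      by (simp add: field_simps)
    then show ?thesis
      by (simp add: r_def power_one_over)
  qed
  have "ln (1 / r) = log 2 (1 / r) * ln 2"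
    by (simp add: log_def)
  also have "\<dots> \<le> (real m + 1) * ln 2"
    using m(2) by (intro mult_right_mono) auto
  finally have "ennreal (ln (1 / cmod \<zeta>) * indicator (cball 0 (1/2)) \<zeta>) \<le> ennreal ((real m + 1) * ln 2)"
    using True by (intro ennreal_leI) (simp add: r_def)
  also have "\<dots> = (\<Sum>k<Suc m. ennreal (ln 2) * indicator (cball 0 ((1/2)^k)) \<zeta>)"
    using small by (simp add: ennreal_mult ennreal_of_nat_eq_real_of_nat[symmetric] add.commute)
  also have "\<dots> \<le> (\<Sum>k. ennreal (ln 2) * indicator (cball 0 ((1/2)^k)) \<zeta>)"
    by (rule sum_le_suminf) auto
  finally show ?thesis .
qed simp

lemma nn_integral_ln_inverse_cball_half:
  "(\<integral>\<^sup>+\<zeta>. ennreal (ln (1 / cmod \<zeta>) * indicator (cball 0 (1/2)) \<zeta>) \<partial>area_disc)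
    \<le> ennreal (4/3 * ln 2)"
proof -
  have "(\<integral>\<^sup>+\<zeta>. ennreal (ln (1 / cmod \<zeta>) * indicator (cball 0 (1/2)) \<zeta>) \<partial>area_disc)
      \<le> (\<integral>\<^sup>+\<zeta>. (\<Sum>k. ennreal (ln 2) * indicator (cball 0 ((1/2)^k)) \<zeta>) \<partial>area_disc)"
    by (rule nn_integral_mono_AE, rule eventually_mono[OF AE_area_disc])
       (rule ln_inverse_le_dyadic_sum, simp)
  also have "\<dots> = (\<Sum>k. ennreal (ln 2) * emeasure area_disc (cball 0 ((1/2)^k)))"
    by (subst nn_integral_suminf)
       (auto simp: measurable_area_disc_iff nn_integral_cmult_indicator)
  also have "\<dots> \<le> (\<Sum>k. ennreal (ln 2) * ennreal (((1/2)^k)\<^sup>2))"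
    by (intro suminf_le mult_left_mono emeasure_area_disc_cball_le) auto
  also have "\<dots> = (\<Sum>k. ennreal (ln 2 * (1/4)^k))"
    by (simp add: ennreal_mult power_mult_distrib[symmetric] power_even_eq[symmetric]
        power2_eq_square power_mult[symmetric] mult.commute)
  also have "\<dots> = ennreal (\<Sum>k. ln 2 * (1/4)^k)"
    by (rule suminf_ennreal2) (auto intro!: summable_mult summable_geometric)
  also have "(\<Sum>k. ln 2 * (1/4::real)^k) = 4/3 * ln 2"
    by (subst suminf_mult) (auto simp: suminf_geometric summable_geometric)
  finally show ?thesis .
qed

locale circle_weights =
  fixes lam mu :: "complex \<Rightarrow> real"
  assumes lam_measurable [measurable]: "(\<lambda>t. lam (cis t)) \<in> borel_measurable lborel"
    and mu_measurable [measurable]: "(\<lambda>t. mu (cis t)) \<in> borel_measurable lborel"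
    and lam_nonneg: "0 \<le> lam (cis t)"
    and mu_nonneg: "0 \<le> mu (cis t)"
begin

lemma borel_measurable_poisson_ext_lam [measurable]: "poisson_ext lam \<in> borel_measurable borel"
  by (rule borel_measurable_poisson_ext[OF lam_measurable])

lemma poisson_ext_lam_nonneg: "cmod z \<le> 1 \<Longrightarrow> 0 \<le> poisson_ext lam z"
  by (rule poisson_ext_nonneg[of lam, OF lam_nonneg])

lemma poisson_ext_mu_nonneg: "cmod z \<le> 1 \<Longrightarrow> 0 \<le> poisson_ext mu z"
  by (rule poisson_ext_nonneg[of mu, OF mu_nonneg])

definition carleson_integral :: "(complex \<Rightarrow> ennreal) \<Rightarrow> complex \<Rightarrow> ennreal" where
  "carleson_integral h z =
    (\<integral>\<^sup>+\<zeta>. h \<zeta> * ennreal (poisson_kernel z \<zeta> * poisson_ext lam \<zeta>) \<partial>area_disc)"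

lemma carleson_density_iff:
  assumes "h \<in> borel_measurable borel"
  shows "carleson lam mu (density area_disc h) \<longleftrightarrow>
    (\<exists>C. \<forall>z\<in>ball 0 1. carleson_integral h z \<le> ennreal (C * poisson_ext mu z))"
proof -
  have "(\<integral>\<^sup>+\<zeta>\<in>ball 0 1. ennreal (poisson_kernel z \<zeta> * poisson_ext lam \<zeta>) \<partial>density area_disc h)
      = (\<integral>\<^sup>+\<zeta>. h \<zeta> * (ennreal (poisson_kernel z \<zeta> * poisson_ext lam \<zeta>) * indicator (ball 0 1) \<zeta>)
          \<partial>area_disc)"
    for z
    using assms by (intro nn_integral_density) (simp_all add: measurable_area_disc_iff)
  also have "\<dots> z = carleson_integral h z" for z
    unfolding carleson_integral_def using AE_area_disc
    by (intro nn_integral_cong_AE) (auto elim!: eventually_mono)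
  finally show ?thesis
    unfolding carleson_def by simp
qed

lemma carleson_density_mono:
  assumes h [measurable]: "h \<in> borel_measurable borel" and g [measurable]: "g \<in> borel_measurable borel"
    and "carleson lam mu (density area_disc g)"
    and le: "AE \<zeta> in area_disc. h \<zeta> \<le> ennreal c * g \<zeta>"
  shows "carleson lam mu (density area_disc h)"
proof -
  obtain C where C: "\<And>z. z \<in> ball 0 1 \<Longrightarrow> carleson_integral g z \<le> ennreal (C * poisson_ext mu z)"
    using assms(3) carleson_density_iff[OF g] by blast
  have "carleson_integral h z \<le> ennreal (c * max C 0 * poisson_ext mu z)" if z: "z \<in> ball 0 1" for z
  proof -
    have "carleson_integral h z
        \<le> (\<integral>\<^sup>+\<zeta>. ennreal c * (g \<zeta> * ennreal (poisson_kernel z \<zeta> * poisson_ext lam \<zeta>)) \<partial>area_disc)"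
      unfolding carleson_integral_def using le
      by (intro nn_integral_mono_AE) (auto elim!: eventually_mono simp: mult.assoc[symmetric] intro: mult_right_mono)
    also have "\<dots> = ennreal c * carleson_integral g z"
      unfolding carleson_integral_def by (rule nn_integral_cmult) measurable
    also have "\<dots> \<le> ennreal c * ennreal (max C 0 * poisson_ext mu z)"
    proof (rule mult_left_mono)
      show "carleson_integral g z \<le> ennreal (max C 0 * poisson_ext mu z)"
        using C[OF z] poisson_ext_mu_nonneg[of z] z
        by (elim order_trans, intro ennreal_leI mult_right_mono) auto
    qed simp
    also have "\<dots> = ennreal (c * max C 0 * poisson_ext mu z)"
      using poisson_ext_mu_nonneg[of z] z by (simp add: ennreal_mult'' mult.assoc)
    finally show ?thesis .
  qed
  then show ?thesis
    using carleson_density_iff[OF h] by blast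
qed

lemma carleson_density_add:
  assumes [measurable]: "g1 \<in> borel_measurable borel" "g2 \<in> borel_measurable borel"
    and "carleson lam mu (density area_disc g1)" "carleson lam mu (density area_disc g2)"
  shows "carleson lam mu (density area_disc (\<lambda>\<zeta>. g1 \<zeta> + g2 \<zeta>))"
proof -
  obtain C1 where C1: "\<And>z. z \<in> ball 0 1 \<Longrightarrow> carleson_integral g1 z \<le> ennreal (C1 * poisson_ext mu z)"
    using assms(3) carleson_density_iff[OF assms(1)] by blast
  obtain C2 where C2: "\<And>z. z \<in> ball 0 1 \<Longrightarrow> carleson_integral g2 z \<le> ennreal (C2 * poisson_ext mu z)"
    using assms(4) carleson_density_iff[OF assms(2)] by blast
  have "carleson_integral (\<lambda>\<zeta>. g1 \<zeta> + g2 \<zeta>) z \<le> ennreal ((max C1 0 + max C2 0) * poisson_ext mu z)"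
    if z: "z \<in> ball 0 1" for z
  proof -
    have U: "0 \<le> poisson_ext mu z"
      using z poisson_ext_mu_nonneg by simp
    have "carleson_integral (\<lambda>\<zeta>. g1 \<zeta> + g2 \<zeta>) z = carleson_integral g1 z + carleson_integral g2 z"
      unfolding carleson_integral_def distrib_right by (rule nn_integral_add) measurable
    also have "\<dots> \<le> ennreal (max C1 0 * poisson_ext mu z) + ennreal (max C2 0 * poisson_ext mu z)"
    proof (rule add_mono)
      show "carleson_integral g1 z \<le> ennreal (max C1 0 * poisson_ext mu z)"
        using C1[OF z] U by (elim order_trans, intro ennreal_leI mult_right_mono) auto
      show "carleson_integral g2 z \<le> ennreal (max C2 0 * poisson_ext mu z)"
        using C2[OF z] U by (elim order_trans, intro ennreal_leI mult_right_mono) auto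
    qed
    also have "\<dots> = ennreal ((max C1 0 + max C2 0) * poisson_ext mu z)"
      using U by (simp add: distrib_right ennreal_plus)
    finally show ?thesis .
  qed
  moreover have "(\<lambda>\<zeta>. g1 \<zeta> + g2 \<zeta>) \<in> borel_measurable borel"
    by measurable
  ultimately show ?thesis
    using carleson_density_iff by blast
qed

lemma carleson_density_null_iff:
  assumes U0: "poisson_ext mu 0 = 0" and h [measurable]: "h \<in> borel_measurable borel"
  shows "carleson lam mu (density area_disc h) \<longleftrightarrow>
    (AE \<zeta> in area_disc. h \<zeta> * ennreal (poisson_ext lam \<zeta>) = 0)"
proof
  assume "carleson lam mu (density area_disc h)"
  then obtain C where "carleson_integral h 0 \<le> ennreal (C * poisson_ext mu 0)"
    using carleson_density_iff[OF h] by (auto dest!: bspec[where x = 0])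
  then have "(\<integral>\<^sup>+\<zeta>. h \<zeta> * ennreal (poisson_ext lam \<zeta>) \<partial>area_disc) = 0"
    using U0 by (simp add: carleson_integral_def)
  then show "AE \<zeta> in area_disc. h \<zeta> * ennreal (poisson_ext lam \<zeta>) = 0"
    by (subst (asm) nn_integral_0_iff_AE) (simp_all add: measurable_area_disc_iff)
next
  assume null: "AE \<zeta> in area_disc. h \<zeta> * ennreal (poisson_ext lam \<zeta>) = 0"
  have "carleson_integral h z = 0" if z: "z \<in> ball 0 1" for z
    unfolding carleson_integral_def
  proof (rule nn_integral_0_iff_AE[THEN iffD2])
    show "AE \<zeta> in area_disc. h \<zeta> * ennreal (poisson_kernel z \<zeta> * poisson_ext lam \<zeta>) = 0"
      using null AE_area_disc
    proof eventually_elim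
      case (elim \<zeta>)
      then have "h \<zeta> = 0 \<or> poisson_ext lam \<zeta> = 0"
        using poisson_ext_lam_nonneg[of \<zeta>] by (auto simp: ennreal_eq_0_iff)
      then show ?case
        by auto
    qed
  qed (simp add: measurable_area_disc_iff)
  then show "carleson lam mu (density area_disc h)"
    unfolding carleson_density_iff[OF h] by (intro exI[of _ 0]) auto
qed

lemma carleson_ln_inverse_cball_half:
  assumes U0: "0 < poisson_ext mu 0"
  shows "carleson lam mu
    (density area_disc (\<lambda>\<zeta>. ennreal (ln (1 / cmod \<zeta>) * indicator (cball 0 (1/2)) \<zeta>)))"
    (is "carleson _ _ (density _ ?g)")
proof -
  define L where "L = poisson_ext lam 0"
  \<comment> \<open>64 = 24 \<cdot> 4/3 \<cdot> 2: on the small disc P_z \<lambda> \<le> 24 L (1 - |z|), the logarithm has mass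
    4/3 ln 2 there, and 1 - |z| \<le> 2 \<mu>(z) / \<mu>(0)\<close>
  define C where "C = 64 * ln 2 * L / poisson_ext mu 0"
  have L0: "0 \<le> L"
    unfolding L_def by (rule poisson_ext_lam_nonneg) simp
  have lam_bound: "poisson_ext lam \<zeta> \<le> 3 * L" if "cmod \<zeta> \<le> 1/2" for \<zeta>
  proof -
    have "poisson_ext lam \<zeta> \<le> (1 + cmod \<zeta>) / (1 - cmod \<zeta>) * L"
      unfolding L_def using that by (intro poisson_ext_harnack(2) lam_measurable lam_nonneg) auto
    also have "\<dots> \<le> 3 * L"
      using that L0 by (intro mult_right_mono) (auto simp: field_simps)
    finally show ?thesis .
  qed
  have "carleson_integral ?g z \<le> ennreal (C * poisson_ext mu z)" if z: "z \<in> ball 0 1" for z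
  proof -
    define K where "K = 24 * L * (1 - cmod z)"
    have K0: "0 \<le> K"
      unfolding K_def using z L0 by simp
    have "carleson_integral ?g z \<le> (\<integral>\<^sup>+\<zeta>. ennreal K * ?g \<zeta> \<partial>area_disc)"
      unfolding carleson_integral_def
    proof (rule nn_integral_mono)
      fix \<zeta> :: complex
      have g_nonneg: "0 \<le> ln (1 / cmod \<zeta>) * indicator (cball 0 (1/2)) \<zeta>"
        by (cases "cmod \<zeta> \<le> 1/2") (simp_all add: ln_inverse_nonneg)
      have "ln (1 / cmod \<zeta>) * indicator (cball 0 (1/2)) \<zeta> * (poisson_kernel z \<zeta> * poisson_ext lam \<zeta>)
          \<le> K * (ln (1 / cmod \<zeta>) * indicator (cball 0 (1/2)) \<zeta>)"
      proof (cases "cmod \<zeta> \<le> 1/2")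
        case True
        have "poisson_kernel z \<zeta> * poisson_ext lam \<zeta> \<le> (8 * (1 - cmod z)) * (3 * L)"
          using z True poisson_kernel_nonneg[of z \<zeta>] poisson_ext_lam_nonneg[of \<zeta>]
          by (intro mult_mono poisson_kernel_le_half_disc lam_bound) auto
        also have "\<dots> = K"
          by (simp add: K_def)
        finally have "poisson_kernel z \<zeta> * poisson_ext lam \<zeta> * ln (1 / cmod \<zeta>) \<le> K * ln (1 / cmod \<zeta>)"
          using True g_nonneg by (intro mult_right_mono) simp_all
        then show ?thesis
          using True by (simp add: mult_ac)
      qed simp
      then show "?g \<zeta> * ennreal (poisson_kernel z \<zeta> * poisson_ext lam \<zeta>) \<le> ennreal K * ?g \<zeta>"
        using g_nonneg K0 by (simp add: ennreal_mult'[symmetric] ennreal_leI)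
    qed
    also have "\<dots> = ennreal K * (\<integral>\<^sup>+\<zeta>. ?g \<zeta> \<partial>area_disc)"
      by (rule nn_integral_cmult) (simp add: measurable_area_disc_iff)
    also have "\<dots> \<le> ennreal K * ennreal (4/3 * ln 2)"
      by (intro mult_left_mono nn_integral_ln_inverse_cball_half) simp
    also have "\<dots> \<le> ennreal (C * poisson_ext mu z)"
    proof -
      have "(1 - cmod z) / 2 \<le> (1 - cmod z) / (1 + cmod z)"
        using z by (intro divide_left_mono) (auto simp: add_pos_nonneg)
      moreover have "(1 - cmod z) / (1 + cmod z) * poisson_ext mu 0 \<le> poisson_ext mu z"
        using z by (intro poisson_ext_harnack(1) mu_measurable mu_nonneg) auto
      ultimately have mu_lower: "(1 - cmod z) / 2 * poisson_ext mu 0 \<le> poisson_ext mu z"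
        using U0 by (meson less_imp_le mult_right_mono order_trans)
      have "K * (4/3 * ln 2) = 64 * ln 2 * L / poisson_ext mu 0 * ((1 - cmod z) / 2 * poisson_ext mu 0)"
        using U0 by (simp add: K_def field_simps)
      also have "\<dots> \<le> C * poisson_ext mu z"
        unfolding C_def using mu_lower U0 L0 by (intro mult_left_mono) auto
      finally have "K * (4/3 * ln 2) \<le> C * poisson_ext mu z" .
      then show ?thesis
        using K0 by (simp add: ennreal_mult'[symmetric] ennreal_leI)
    qed
    finally show ?thesis .
  qed
  moreover have "?g \<in> borel_measurable borel"
    by measurable
  ultimately show ?thesis
    using carleson_density_iff by blast
qed

lemma carleson_ln_inverse_imp_one_minus_sq:
  fixes q :: "complex \<Rightarrow> real"
  assumes [measurable]: "q \<in> borel_measurable borel" and q_nonneg: "\<And>\<zeta>. 0 \<le> q \<zeta>"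
    and "carleson lam mu (density area_disc (\<lambda>\<zeta>. ennreal (q \<zeta> * ln (1 / cmod \<zeta>))))"
  shows "carleson lam mu (density area_disc (\<lambda>\<zeta>. ennreal (q \<zeta> * (1 - (cmod \<zeta>)\<^sup>2))))"
proof (rule carleson_density_mono[OF _ _ assms(3)])
  show "AE \<zeta> in area_disc.
      ennreal (q \<zeta> * (1 - (cmod \<zeta>)\<^sup>2)) \<le> ennreal 2 * ennreal (q \<zeta> * ln (1 / cmod \<zeta>))"
    using AE_area_disc
  proof eventually_elim
    case (elim \<zeta>)
    then have "q \<zeta> * (1 - (cmod \<zeta>)\<^sup>2) \<le> 2 * (q \<zeta> * ln (1 / cmod \<zeta>))"
      using q_nonneg[of \<zeta>] one_minus_sq_le_two_ln_inverse[of "cmod \<zeta>"]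
      by (auto simp: mult.left_commute intro: mult_left_mono)
    then have "ennreal (q \<zeta> * (1 - (cmod \<zeta>)\<^sup>2)) \<le> ennreal (2 * (q \<zeta> * ln (1 / cmod \<zeta>)))"
      by (rule ennreal_leI)
    then show ?case
      using ennreal_mult'[of 2] by simp
  qed
qed (measurable, measurable)

lemma carleson_one_minus_sq_imp_ln_inverse:
  fixes q :: "complex \<Rightarrow> real"
  assumes [measurable]: "q \<in> borel_measurable borel" and q_nonneg: "\<And>\<zeta>. 0 \<le> q \<zeta>"
    and q_bounded: "\<And>\<zeta>. \<zeta> \<in> cball 0 (1/2) \<Longrightarrow> q \<zeta> \<le> B"
    and carleson_v2: "carleson lam mu (density area_disc (\<lambda>\<zeta>. ennreal (q \<zeta> * (1 - (cmod \<zeta>)\<^sup>2))))"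
  shows "carleson lam mu (density area_disc (\<lambda>\<zeta>. ennreal (q \<zeta> * ln (1 / cmod \<zeta>))))"
    (is "carleson _ _ (density _ ?v1)")
proof -
  let ?v2 = "\<lambda>\<zeta>. ennreal (q \<zeta> * (1 - (cmod \<zeta>)\<^sup>2))"
  let ?g = "\<lambda>\<zeta>. ennreal (ln (1 / cmod \<zeta>) * indicator (cball 0 (1/2)) \<zeta>)"
  have v1_meas: "?v1 \<in> borel_measurable borel" and v2_meas: "?v2 \<in> borel_measurable borel"
    and g_meas: "?g \<in> borel_measurable borel"
    by measurable
  show ?thesis
  proof (cases "poisson_ext mu 0 = 0")
    case True
    have "AE \<zeta> in area_disc. ?v2 \<zeta> * ennreal (poisson_ext lam \<zeta>) = 0"
      using carleson_v2 carleson_density_null_iff[OF True v2_meas] by blast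
    then have "AE \<zeta> in area_disc. ?v1 \<zeta> * ennreal (poisson_ext lam \<zeta>) = 0"
      using AE_area_disc
    proof eventually_elim
      case (elim \<zeta>)
      have "0 < 1 - (cmod \<zeta>)\<^sup>2"
        using elim by (simp add: abs_square_less_1)
      then have "?v2 \<zeta> = 0 \<Longrightarrow> q \<zeta> = 0"
        using q_nonneg[of \<zeta>] by (simp add: ennreal_eq_0_iff mult_le_0_iff)
      then show ?case
        using elim by auto
    qed
    then show ?thesis
      using carleson_density_null_iff[OF True v1_meas] by blast
  next
    case False
    then have "0 < poisson_ext mu 0"
      using poisson_ext_mu_nonneg[of 0] by simp
    then have "carleson lam mu (density area_disc (\<lambda>\<zeta>. ?v2 \<zeta> + ?g \<zeta>))"
      using carleson_ln_inverse_cball_half carleson_v2 by (intro carleson_density_add[OF v2_meas g_meas])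
    moreover have "AE \<zeta> in area_disc. ?v1 \<zeta> \<le> ennreal (max 2 B) * (?v2 \<zeta> + ?g \<zeta>)"
      using AE_area_disc
    proof eventually_elim
      case (elim \<zeta>)
      have "q \<zeta> * ln (1 / cmod \<zeta>)
          \<le> max 2 B * (q \<zeta> * (1 - (cmod \<zeta>)\<^sup>2) + ln (1 / cmod \<zeta>) * indicator (cball 0 (1/2)) \<zeta>)"
      proof (cases "cmod \<zeta> \<le> 1/2")
        case True
        have "q \<zeta> * ln (1 / cmod \<zeta>) \<le> B * ln (1 / cmod \<zeta>)"
          using elim True q_bounded[of \<zeta>] by (intro mult_right_mono ln_inverse_nonneg) auto
        also have "\<dots> \<le> max 2 B * (q \<zeta> * (1 - (cmod \<zeta>)\<^sup>2) + ln (1 / cmod \<zeta>))"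
          using elim True q_nonneg[of \<zeta>] ln_inverse_nonneg[of "cmod \<zeta>"]
          by (intro mult_mono) (auto simp: abs_square_le_1)
        finally show ?thesis
          using True by simp
      next
        case False
        have "q \<zeta> * ln (1 / cmod \<zeta>) \<le> 2 * (q \<zeta> * (1 - (cmod \<zeta>)\<^sup>2))"
          using elim False q_nonneg[of \<zeta>] ln_inverse_le_two_one_minus_sq[of "cmod \<zeta>"]
          by (auto simp: mult.left_commute intro: mult_left_mono)
        also have "\<dots> \<le> max 2 B * (q \<zeta> * (1 - (cmod \<zeta>)\<^sup>2))"
          using elim q_nonneg[of \<zeta>] by (intro mult_right_mono) (auto simp: abs_square_le_1)
        finally show ?thesis
          using False by simp
      qed
      then have "?v1 \<zeta> \<le> ennreal (max 2 B * (q \<zeta> * (1 - (cmod \<zeta>)\<^sup>2)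
          + ln (1 / cmod \<zeta>) * indicator (cball 0 (1/2)) \<zeta>))"
        by (rule ennreal_leI)
      also have "\<dots> = ennreal (max 2 B) * (?v2 \<zeta> + ?g \<zeta>)"
        using elim q_nonneg[of \<zeta>] ln_inverse_nonneg[of "cmod \<zeta>"]
        by (simp add: ennreal_mult'' ennreal_plus abs_square_le_1)
      finally show ?case .
    qed
    ultimately show ?thesis
      by (rule carleson_density_mono[OF v1_meas borel_measurable_add[OF v2_meas g_meas]])
  qed
qed

lemma carleson_ln_inverse_iff_one_minus_sq_continuous:
  fixes q :: "complex \<Rightarrow> real"
  assumes q_cont: "continuous_on (ball 0 1) q"
    and q_nonneg: "\<And>\<zeta>. \<zeta> \<in> ball 0 1 \<Longrightarrow> 0 \<le> q \<zeta>"
  shows "carleson lam mu (density area_disc (\<lambda>\<zeta>. ennreal (q \<zeta> * ln (1 / cmod \<zeta>)))) \<longleftrightarrow>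
    carleson lam mu (density area_disc (\<lambda>\<zeta>. ennreal (q \<zeta> * (1 - (cmod \<zeta>)\<^sup>2))))"
proof -
  define q' where "q' \<zeta> = indicator (ball 0 1) \<zeta> * q \<zeta>" for \<zeta>
  have "continuous_on (cball 0 (1/2)) q"
    using q_cont by (rule continuous_on_subset) auto
  then obtain \<zeta>\<^sub>0 where "\<forall>\<zeta>\<in>cball 0 (1/2). q \<zeta> \<le> q \<zeta>\<^sub>0"
    using continuous_attains_sup[of "cball 0 (1/2)" q] by auto
  then have q'_bounded: "q' \<zeta> \<le> q \<zeta>\<^sub>0" if "\<zeta> \<in> cball 0 (1/2)" for \<zeta>
    using that by (simp add: q'_def)
  have "q' \<in> borel_measurable borel"
    unfolding q'_def using borel_measurable_continuous_on_indicator[OF _ q_cont] by simp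
  moreover have "0 \<le> q' \<zeta>" for \<zeta>
    using q_nonneg by (simp add: q'_def indicator_def)
  moreover have
    "density area_disc (\<lambda>\<zeta>. ennreal (q \<zeta> * w \<zeta>)) = density area_disc (\<lambda>\<zeta>. ennreal (q' \<zeta> * w \<zeta>))"
    for w :: "complex \<Rightarrow> real"
    by (rule density_area_disc_cong) (simp add: q'_def)
  ultimately show ?thesis
    using carleson_ln_inverse_imp_one_minus_sq[of q'] carleson_one_minus_sq_imp_ln_inverse[of q' "q \<zeta>\<^sub>0"]
      q'_bounded by auto
qed

end

theorem proposition4p2:
  fixes mu lam :: "complex \<Rightarrow> real" and \<phi> :: "complex \<Rightarrow> complex"
  assumes "A2_weight mu" and "A2_weight lam"
    and "L1_circle \<phi>"
    and "poisson_ext \<phi> holomorphic_on ball 0 1 \<or>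
         (\<lambda>z. cnj (poisson_ext \<phi> z)) holomorphic_on ball 0 1"
  shows "carleson lam mu
           (density area_disc (\<lambda>z. ennreal (grad_sq (poisson_ext \<phi>) z * ln (1 / cmod z))))
     \<longleftrightarrow> carleson lam mu
           (density area_disc (\<lambda>z. ennreal (grad_sq (poisson_ext \<phi>) z * (1 - (cmod z)\<^sup>2))))"
proof -
  interpret circle_weights lam mu
    using assms(1,2) by unfold_locales (auto simp: A2_weight_def)
  show ?thesis
    using continuous_on_grad_sq[OF assms(4)] grad_sq_nonneg
    by (intro carleson_ln_inverse_iff_one_minus_sq_continuous) auto
qed

end
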